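(* Let $T^\sigma=(T,\sigma)$ be a signed tree. Then $\dim(T)-\mathrm{ext}(T)\le \dim(T^\sigma)\le \dim(T)$; equivalently, $\mathrm{mdd}(T^\sigma)\le \mathrm{ext}(T)$.
   Context: A signed graph $\Sigma=(G,\sigma)$ consists of a finite simple connected graph $G=(V,E)$ and a signature $\sigma:E\to\{+1,-1\}$. In a signed tree every pair of vertices $u,v$ is joined by a unique path $P(u,v)$, and the signed distance is $d_\Sigma(u,v)=\sigma(P(u,v))\,d(u,v)$, where $d$ is the usual distance and $\sigma(P)$ is the product of edge signs of $P$. For an ordered subset $W=(w_1,\dots,w_k)$ of vertices, $r_\Sigma(v|W)=(d_\Sigma(v,w_1),\dots,d_\Sigma(v,w_k))$; $W$ is a resolving set if distinct vertices have distinct representations; $\dim(T^\sigma)$ is the minimum size of a resolving set, and $\dim(T)$ is defined analogously for the unsigned tree using $d$. The metric dimensional difference is $\mathrm{mdd}(T^\sigma)=\dim(T)-\dim(T^\sigma)$. Tree terminology: a leaf is a vertex of degree $1$; a major vertex is a vertex of degree at least $3$; a leaf $u$ is a terminal vertex of a major vertex $v$ if $d(u,v)<d(u,w)$ for every other major vertex $w$; an exterior major vertex is a major vertex having at least one terminal vertex; $\mathrm{ext}(T)$ is the number of exterior major vertices of $T$. *)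

theory Defs
  imports Main
begin

definition simple_graph :: "'a set \<Rightarrow> 'a set set \<Rightarrow> bool" where
  "simple_graph V E \<longleftrightarrow> finite V \<and> V \<noteq> {} \<and>
     (\<forall>e\<in>E. \<exists>x y. x \<noteq> y \<and> x \<in> V \<and> y \<in> V \<and> e = {x, y})"

definition is_path :: "'a set set \<Rightarrow> 'a list \<Rightarrow> 'a \<Rightarrow> 'a \<Rightarrow> bool" where
  "is_path E p u v \<longleftrightarrow> p \<noteq> [] \<and> hd p = u \<and> last p = v \<and> distinct p \<and>
     (\<forall>i. Suc i < length p \<longrightarrow> {p ! i, p ! Suc i} \<in> E)"

definition is_cycle :: "'a set set \<Rightarrow> 'a list \<Rightarrow> bool" where
  "is_cycle E c \<longleftrightarrow> length c \<ge> 3 \<and> distinct c \<and>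
     (\<forall>i. Suc i < length c \<longrightarrow> {c ! i, c ! Suc i} \<in> E) \<and> {last c, hd c} \<in> E"

definition connected_graph :: "'a set \<Rightarrow> 'a set set \<Rightarrow> bool" where
  "connected_graph V E \<longleftrightarrow> (\<forall>u\<in>V. \<forall>v\<in>V. \<exists>p. is_path E p u v)"

definition is_tree :: "'a set \<Rightarrow> 'a set set \<Rightarrow> bool" where
  "is_tree V E \<longleftrightarrow> simple_graph V E \<and> connected_graph V E \<and> (\<nexists>c. is_cycle E c)"

definition gdist :: "'a set set \<Rightarrow> 'a \<Rightarrow> 'a \<Rightarrow> nat" where
  "gdist E u v = (LEAST n. \<exists>p. is_path E p u v \<and> length p = Suc n)"

definition tree_path :: "'a set set \<Rightarrow> 'a \<Rightarrow> 'a \<Rightarrow> 'a list" where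
  "tree_path E u v = (THE p. is_path E p u v)"

definition path_sign :: "('a set \<Rightarrow> int) \<Rightarrow> 'a list \<Rightarrow> int" where
  "path_sign \<sigma> p = (\<Prod>i<length p - 1. \<sigma> {p ! i, p ! Suc i})"

definition signed_dist :: "'a set set \<Rightarrow> ('a set \<Rightarrow> int) \<Rightarrow> 'a \<Rightarrow> 'a \<Rightarrow> int" where
  "signed_dist E \<sigma> u v = path_sign \<sigma> (tree_path E u v) * int (gdist E u v)"

definition resolving :: "'a set \<Rightarrow> ('a \<Rightarrow> 'a \<Rightarrow> int) \<Rightarrow> 'a list \<Rightarrow> bool" where
  "resolving V f W \<longleftrightarrow> distinct W \<and> set W \<subseteq> V \<and> inj_on (\<lambda>v. map (f v) W) V"

definition metric_dim :: "'a set \<Rightarrow> ('a \<Rightarrow> 'a \<Rightarrow> int) \<Rightarrow> nat" where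
  "metric_dim V f = (LEAST k. \<exists>W. length W = k \<and> resolving V f W)"

definition tree_dim :: "'a set \<Rightarrow> 'a set set \<Rightarrow> nat" where
  "tree_dim V E = metric_dim V (\<lambda>u v. int (gdist E u v))"

definition signed_tree_dim :: "'a set \<Rightarrow> 'a set set \<Rightarrow> ('a set \<Rightarrow> int) \<Rightarrow> nat" where
  "signed_tree_dim V E \<sigma> = metric_dim V (signed_dist E \<sigma>)"

definition degree :: "'a set set \<Rightarrow> 'a \<Rightarrow> nat" where
  "degree E v = card {u. {u, v} \<in> E}"

definition is_leaf :: "'a set \<Rightarrow> 'a set set \<Rightarrow> 'a \<Rightarrow> bool" where
  "is_leaf V E v \<longleftrightarrow> v \<in> V \<and> degree E v = 1"

definition is_major :: "'a set \<Rightarrow> 'a set set \<Rightarrow> 'a \<Rightarrow> bool" where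
  "is_major V E v \<longleftrightarrow> v \<in> V \<and> degree E v \<ge> 3"

definition is_terminal :: "'a set \<Rightarrow> 'a set set \<Rightarrow> 'a \<Rightarrow> 'a \<Rightarrow> bool" where
  "is_terminal V E u v \<longleftrightarrow> is_leaf V E u \<and> is_major V E v \<and>
     (\<forall>w. is_major V E w \<and> w \<noteq> v \<longrightarrow> gdist E u v < gdist E u w)"

definition is_exterior_major :: "'a set \<Rightarrow> 'a set set \<Rightarrow> 'a \<Rightarrow> bool" where
  "is_exterior_major V E v \<longleftrightarrow> is_major V E v \<and> (\<exists>u. is_terminal V E u v)"

definition ext :: "'a set \<Rightarrow> 'a set set \<Rightarrow> nat" where
  "ext V E = card {v. is_exterior_major V E v}"

end

theory Submission
  imports Defs
begin

(* Since |d_sigma(u,v)| = d(u,v), a resolving set of T also resolves the signed tree, so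
   dim(T^sigma) <= dim(T).

   Conversely let W resolve T^sigma. If two neighbours a, b of a vertex c have branches (components
   of T - c) containing no vertex of W and the edges ca, cb carry the same sign, then a and b have
   the same signed distances to W; so no vertex has three W-free branches. On the other hand, if W
   does not resolve x and y in the unsigned tree, the vertex where the paths from W to x and to y
   split has two W-free branches. Adding one vertex from a free branch of each lowest major vertex
   with two free branches destroys all such configurations when T has a major vertex; these lowest
   major vertices are exterior, so at most ext(T) vertices are added. A path is resolved by one
   leaf. Hence dim(T) <= |W| + ext(T). *)

section \<open>Paths in acyclic graphs\<close>

lemma ex_max_on_finite:
  fixes f :: "'a \<Rightarrow> 'b::linorder"
  assumes "finite S" "S \<noteq> {}"
  obtains z where "z \<in> S" "\<And>y. y \<in> S \<Longrightarrow> f y \<le> f z"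
proof -
  have "Max (f ` S) \<in> f ` S" using assms by (intro Max_in) auto
  then obtain z where "z \<in> S" "f z = Max (f ` S)" by auto
  with assms(1) show thesis using that by simp
qed

lemma is_path_iff_successively:
  "is_path E p u v \<longleftrightarrow> p \<noteq> [] \<and> hd p = u \<and> last p = v \<and> distinct p \<and>
     successively (\<lambda>x y. {x,y} \<in> E) p"
  by (simp add: is_path_def successively_conv_nth)

lemma is_cycle_iff_successively:
  "is_cycle E c \<longleftrightarrow> length c \<ge> 3 \<and> distinct c \<and>
     successively (\<lambda>x y. {x,y} \<in> E) c \<and> {last c, hd c} \<in> E"
  by (simp add: is_cycle_def successively_conv_nth)

lemma successively_edge_rev:
  "successively (\<lambda>x y. {x,y} \<in> E) (rev p) \<longleftrightarrow> successively (\<lambda>x y. {x,y} \<in> E) p"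
  by (simp add: insert_commute)

lemma successively_take: "successively P p \<Longrightarrow> successively P (take n p)"
  by (metis append_take_drop_id successively_append_iff)

lemma successively_drop: "successively P p \<Longrightarrow> successively P (drop n p)"
  by (metis append_take_drop_id successively_append_iff)

lemma is_path_rev: "is_path E p u v \<Longrightarrow> is_path E (rev p) v u"
  unfolding is_path_iff_successively by (simp add: hd_rev last_rev insert_commute)

lemma first_common_element:
  assumes "distinct q" "set p \<inter> set q \<noteq> {}"
  obtains j k where "j < length p" "k < length q" "p ! j = q ! k"
    "set (take (Suc j) p) \<inter> set (take k q) = {}"
proof -
  let ?P = "\<lambda>j. j < length p \<and> p ! j \<in> set q"
  define j where "j = Least ?P"
  have "\<exists>j. ?P j" using assms(2) by (auto simp: in_set_conv_nth)
  then have Pj: "?P j" unfolding j_def by (rule LeastI_ex)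
  obtain k where k: "k < length q" "q ! k = p ! j" using Pj by (auto simp: j_def in_set_conv_nth)
  have disj: "set (take (Suc j) p) \<inter> set (take k q) = {}"
  proof (rule ccontr)
    assume "\<not> ?thesis"
    then obtain i k' where i: "i < Suc j" "i < length p" and k': "k' < k" "p ! i = q ! k'"
      by (auto simp: in_set_conv_nth) metis
    have "p ! i \<in> set q" using k' k by (simp add: in_set_conv_nth) (metis order.strict_trans)
    then have "i = j" using i not_less_Least[of i ?P] by (auto simp: j_def less_Suc_eq)
    then show False using k k' nth_eq_iff_index_eq[OF assms(1)] by fastforce
  qed
  show thesis using Pj by (intro that[OF _ k(1) k(2)[symmetric] disj]) simp
qed

text \<open>The hypotheses on \<open>j\<close>, \<open>k\<close> say that \<open>p ! j\<close> is the first vertex of \<open>p\<close> on \<open>q\<close>.\<close>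
lemma cycle_of_two_paths:
  assumes "{u,a} \<in> E" "{u,b} \<in> E" "a \<noteq> b" "is_path E p a v" "is_path E q b v"
    "u \<notin> set p" "u \<notin> set q"
    and jk: "j < length p" "k < length q" "p ! j = q ! k"
    "set (take (Suc j) p) \<inter> set (take k q) = {}"
  shows "is_cycle E ((u # take (Suc j) p) @ rev (take k q))"
proof -
  let ?c = "(u # take (Suc j) p) @ rev (take k q)"
  let ?E = "\<lambda>x y. {x,y} \<in> E"
  have p: "p \<noteq> []" "hd p = a" "distinct p" "successively ?E p"
    using assms(4) by (auto simp: is_path_iff_successively)
  have q: "q \<noteq> []" "hd q = b" "distinct q" "successively ?E q"
    using assms(5) by (auto simp: is_path_iff_successively)
  have "j \<noteq> 0 \<or> k \<noteq> 0" using jk(3) p(1,2) q(1,2) assms(3) by (metis hd_conv_nth)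
  then have "length ?c \<ge> 3" using jk(1,2) by auto
  moreover have "distinct ?c"
  proof -
    have "u \<notin> set (take (Suc j) p)" "u \<notin> set (take k q)" using assms(6,7) in_set_takeD by metis+
    then show ?thesis using jk(4) p(3) q(3) by simp
  qed
  moreover have "successively ?E ?c"
  proof -
    have "hd (take (Suc j) p) = a" using p(1,2) by (cases p) auto
    then have "successively ?E (u # take (Suc j) p)"
      using successively_take[OF p(4)] assms(1) by (simp add: successively_Cons)
    moreover have "successively ?E (rev (take k q))"
      by (simp only: successively_edge_rev successively_take[OF q(4)])
    moreover have "?E (last (u # take (Suc j) p)) (hd (rev (take k q)))" if "take k q \<noteq> []"
    proof -
      have "last (u # take (Suc j) p) = q ! k" using jk(1,3) by (simp add: take_Suc_conv_app_nth)
      moreover have "hd (rev (take k q)) = q ! (k - 1)"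
        using that jk(2) by (simp add: hd_rev last_conv_nth min_def)
      ultimately show ?thesis
        using successively_nth[OF q(4), of "k - 1"] that jk(2) by (simp add: insert_commute)
    qed
    ultimately show ?thesis unfolding successively_append_iff by (simp only: rev_is_Nil_conv) blast
  qed
  moreover have "last ?c = b"
  proof (cases k)
    case 0
    then show ?thesis using jk(1,3) q(1,2) by (simp add: hd_conv_nth take_Suc_conv_app_nth)
  next
    case (Suc k')
    then show ?thesis using jk(2) q(1,2) by (simp add: hd_conv_nth last_rev)
  qed
  ultimately show "is_cycle E ?c" using assms(2) by (simp add: is_cycle_iff_successively insert_commute)
qed

lemma acyclic_path_unique:
  assumes "\<nexists>c. is_cycle E c"
  shows "is_path E p u v \<Longrightarrow> is_path E q u v \<Longrightarrow> p = q"
proof (induction p arbitrary: q u)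
  case Nil
  then show ?case by (simp add: is_path_def)
next
  case (Cons x p')
  have "x = u" using Cons.prems by (simp add: is_path_def)
  obtain q' where q: "q = u # q'" using Cons.prems(2) by (metis is_path_def list.collapse)
  consider "p' = [] \<and> q' = []" | "p' \<noteq> [] \<and> q' \<noteq> []"
    using Cons.prems q \<open>x = u\<close> by (auto simp: is_path_def) (metis last_in_set)+
  then show ?case
  proof cases
    case 1
    then show ?thesis using q \<open>x = u\<close> by simp
  next
    case 2
    have p': "is_path E p' (hd p') v" "{u, hd p'} \<in> E" "u \<notin> set p'"
      using Cons.prems(1) 2 \<open>x = u\<close> by (auto simp: is_path_iff_successively successively_Cons)
    have q': "is_path E q' (hd q') v" "{u, hd q'} \<in> E" "u \<notin> set q'"
      using Cons.prems(2) 2 q by (auto simp: is_path_iff_successively successively_Cons)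
    show ?thesis
    proof (cases "hd p' = hd q'")
      case True
      then show ?thesis using Cons.IH p' q' q \<open>x = u\<close> by metis
    next
      case False
      have "last p' \<in> set p' \<inter> set q'"
        using p'(1) q'(1) by (auto simp: is_path_def) (metis last_in_set)
      then obtain j k where "j < length p'" "k < length q'" "p' ! j = q' ! k"
        "set (take (Suc j) p') \<inter> set (take k q') = {}"
        using first_common_element[of q' p'] q'(1) by (auto simp: is_path_def)
      then show ?thesis
        using cycle_of_two_paths[OF p'(2) q'(2) False p'(1) q'(1) p'(3) q'(3)] assms by blast
    qed
  qed
qed


section \<open>Paths and distances in a tree\<close>

locale tree =
  fixes V :: "'a set" and E :: "'a set set"
  assumes is_tree: "is_tree V E"
begin

abbreviation P where "P u v \<equiv> tree_path E u v"
abbreviation d where "d u v \<equiv> gdist E u v"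

lemma finite_V: "finite V"
  using is_tree by (simp add: is_tree_def simple_graph_def)

lemma no_cycle: "\<nexists>c. is_cycle E c"
  using is_tree by (simp add: is_tree_def)

lemma edge_vertices:
  assumes "{x,y} \<in> E" shows "x \<in> V \<and> y \<in> V \<and> x \<noteq> y"
proof -
  have "\<forall>e\<in>E. \<exists>x y. x \<noteq> y \<and> x \<in> V \<and> y \<in> V \<and> e = {x, y}"
    using is_tree by (simp add: is_tree_def simple_graph_def)
  then show ?thesis using assms by (metis doubleton_eq_iff)
qed

lemma tree_path_eq: "is_path E p u v \<Longrightarrow> P u v = p"
  unfolding tree_path_def using acyclic_path_unique[OF no_cycle] by blast

lemma is_path_tree_path:
  assumes "u \<in> V" "v \<in> V" shows "is_path E (P u v) u v"
proof -
  obtain p where "is_path E p u v"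
    using is_tree assms unfolding is_tree_def connected_graph_def by blast
  then show ?thesis using tree_path_eq by simp
qed

lemma tree_path_props:
  assumes "u \<in> V" "v \<in> V"
  shows "P u v \<noteq> []" "hd (P u v) = u" "last (P u v) = v" "distinct (P u v)"
    "successively (\<lambda>x y. {x,y} \<in> E) (P u v)" "P u v ! 0 = u"
  using is_path_tree_path[OF assms] by (auto simp: is_path_iff_successively hd_conv_nth[symmetric])

lemma set_tree_path_subset:
  assumes "u \<in> V" "v \<in> V" shows "set (P u v) \<subseteq> V"
proof
  fix z assume "z \<in> set (P u v)"
  then obtain i where i: "i < length (P u v)" "z = P u v ! i" by (auto simp: in_set_conv_nth)
  show "z \<in> V"
  proof (cases i)
    case 0
    then show ?thesis using assms i tree_path_props by simp
  next
    case (Suc j)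
    then show ?thesis
      using successively_nth[OF tree_path_props(5)[OF assms], of j] i edge_vertices by simp
  qed
qed

lemma gdist_eq_length:
  assumes "u \<in> V" "v \<in> V" shows "d u v = length (P u v) - 1"
  unfolding gdist_def
proof (rule Least_equality)
  show "\<exists>p. is_path E p u v \<and> length p = Suc (length (P u v) - 1)"
    using is_path_tree_path[OF assms] tree_path_props(1)[OF assms] by auto
next
  fix n assume "\<exists>p. is_path E p u v \<and> length p = Suc n"
  then show "length (P u v) - 1 \<le> n" using tree_path_eq by auto
qed

lemma length_tree_path: "u \<in> V \<Longrightarrow> v \<in> V \<Longrightarrow> length (P u v) = Suc (d u v)"
  using gdist_eq_length[of u v] tree_path_props(1)[of u v] by simp

lemma tree_path_rev:
  assumes "u \<in> V" "v \<in> V" shows "P v u = rev (P u v)"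
  using tree_path_eq[OF is_path_rev[OF is_path_tree_path[OF assms]]] .

lemma gdist_sym: "u \<in> V \<Longrightarrow> v \<in> V \<Longrightarrow> d v u = d u v"
  using gdist_eq_length[of u v] gdist_eq_length[of v u] tree_path_rev[of u v] by simp

lemma tree_path_self: "P u u = [u]"
  by (rule tree_path_eq) (simp add: is_path_def)

lemma gdist_self: "u \<in> V \<Longrightarrow> d u u = 0"
  using gdist_eq_length tree_path_self by simp

lemma gdist_eq_0_iff: "u \<in> V \<Longrightarrow> v \<in> V \<Longrightarrow> d u v = 0 \<longleftrightarrow> u = v"
  using length_tree_path[of u v] tree_path_props[of u v] gdist_self
  by (cases "P u v") auto

lemma tree_path_edge: "{u,v} \<in> E \<Longrightarrow> P u v = [u,v]"
  using edge_vertices by (intro tree_path_eq) (simp add: is_path_def nth_Cons split: nat.splits)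

lemma gdist_edge: "{u,v} \<in> E \<Longrightarrow> d u v = 1"
  using tree_path_edge edge_vertices gdist_eq_length by simp

lemma tree_path_take:
  assumes "u \<in> V" "v \<in> V" "i < length (P u v)"
  shows "P u (P u v ! i) = take (Suc i) (P u v)"
proof (rule tree_path_eq)
  let ?p = "P u v"
  note p = tree_path_props[OF assms(1,2)]
  show "is_path E (take (Suc i) ?p) u (?p ! i)"
    unfolding is_path_iff_successively
  proof (intro conjI)
    show "take (Suc i) ?p \<noteq> []" using p by simp
    show "hd (take (Suc i) ?p) = u" using p by simp
    show "last (take (Suc i) ?p) = ?p ! i" using assms by (simp add: take_Suc_conv_app_nth)
    show "distinct (take (Suc i) ?p)" using p by simp
    show "successively (\<lambda>x y. {x,y} \<in> E) (take (Suc i) ?p)" using p successively_take by blast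
  qed
qed

lemma tree_path_drop:
  assumes "u \<in> V" "v \<in> V" "i < length (P u v)"
  shows "P (P u v ! i) v = drop i (P u v)"
proof (rule tree_path_eq)
  let ?p = "P u v"
  note p = tree_path_props[OF assms(1,2)]
  show "is_path E (drop i ?p) (?p ! i) v"
    unfolding is_path_iff_successively
  proof (intro conjI)
    show "drop i ?p \<noteq> []" using assms by simp
    show "hd (drop i ?p) = ?p ! i" using assms by (simp add: hd_drop_conv_nth)
    show "last (drop i ?p) = v" using assms p by simp
    show "distinct (drop i ?p)" using p by simp
    show "successively (\<lambda>x y. {x,y} \<in> E) (drop i ?p)" using p successively_drop by blast
  qed
qed

lemma tree_path_append:
  assumes "u \<in> V" "v \<in> V" "w \<in> V" "set (P u v) \<inter> set (P v w) \<subseteq> {v}"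
  shows "P u w = P u v @ tl (P v w)"
proof (rule tree_path_eq)
  let ?p = "P u v" and ?q = "P v w" and ?E = "\<lambda>x y. {x,y} \<in> E"
  note p = tree_path_props[OF assms(1,2)]
  have q: "?q = v # tl ?q" using tree_path_props(1,2)[OF assms(2,3)] by (metis list.collapse)
  then have qd: "distinct (v # tl ?q)" and qs: "successively ?E (v # tl ?q)"
    and ql: "last (v # tl ?q) = w"
    using tree_path_props(3-5)[OF assms(2,3)] by metis+
  have "set ?p \<inter> set (tl ?q) = {}"
    using assms(4) qd by (subst (asm) q) auto
  moreover have "successively ?E (?p @ tl ?q)"
    using p(3,5) qs by (cases "tl ?q") (simp_all add: successively_append_iff successively_Cons)
  ultimately show "is_path E (?p @ tl ?q) u w"
    using p qd ql by (cases "tl ?q") (simp_all add: is_path_iff_successively)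
qed

lemma tree_path_split:
  assumes "u \<in> V" "v \<in> V" "z \<in> set (P u v)"
  shows "z \<in> V" "P u v = P u z @ tl (P z v)" "d u v = d u z + d z v"
proof -
  show zV: "z \<in> V" using assms set_tree_path_subset by blast
  obtain i where i: "i < length (P u v)" "z = P u v ! i" using assms by (auto simp: in_set_conv_nth)
  show split: "P u v = P u z @ tl (P z v)"
    using tree_path_take[OF assms(1,2) i(1)] tree_path_drop[OF assms(1,2) i(1)] i(2)
    by (metis append_take_drop_id drop_Suc tl_drop)
  show "d u v = d u z + d z v"
    using arg_cong[OF split, of length] length_tree_path assms zV by simp
qed

lemma gdist_append:
  assumes "u \<in> V" "v \<in> V" "w \<in> V" "set (P u v) \<inter> set (P v w) \<subseteq> {v}"
  shows "d u w = d u v + d v w"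
  using arg_cong[OF tree_path_append[OF assms], of length] length_tree_path assms by simp

lemma tree_path_nth1_eq:
  assumes "c \<in> V" "x \<in> V" "z \<in> set (P c x)" "z \<noteq> c"
  shows "P c z ! 1 = P c x ! 1"
proof -
  obtain i where i: "i < length (P c x)" "z = P c x ! i" using assms by (auto simp: in_set_conv_nth)
  have "i \<noteq> 0" using i assms tree_path_props(6)[OF assms(1,2)] by (metis gr0I)
  then show ?thesis using tree_path_take[OF assms(1,2) i(1)] i by simp
qed

lemma set_tree_path_suffix_subset:
  assumes "u \<in> V" "v \<in> V" "z \<in> set (P u v)"
  shows "set (P z v) \<subseteq> set (P u v)"
proof -
  obtain i where i: "i < length (P u v)" "z = P u v ! i" using assms by (auto simp: in_set_conv_nth)
  show ?thesis using tree_path_drop[OF assms(1,2) i(1)] i(2) by (simp add: set_drop_subset)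
qed

text \<open>The vertex \<open>m\<close> where the paths from \<open>r\<close> to \<open>x\<close> and to \<open>w\<close> part ways is the one on
  both paths farthest from \<open>r\<close>.\<close>
lemma branching_vertex:
  assumes "r \<in> V" "x \<in> V" "w \<in> V"
  obtains m where "m \<in> V" "set (P m x) \<inter> set (P m w) \<subseteq> {m}"
    "d r x = d r m + d m x" "d r w = d r m + d m w" "d x w = d x m + d m w"
proof -
  let ?S = "set (P r x) \<inter> set (P r w)"
  have "r \<in> ?S" using assms tree_path_props by (metis IntI list.set_sel(1))
  then obtain m where m: "m \<in> ?S" and mmax: "\<And>z. z \<in> ?S \<Longrightarrow> d r z \<le> d r m"
    using ex_max_on_finite[of ?S "d r"] by blast
  have mV: "m \<in> V" using m assms set_tree_path_subset by blast
  have ex: "d r x = d r m + d m x" and ew: "d r w = d r m + d m w"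
    using tree_path_split(3) assms m by blast+
  have int: "set (P m x) \<inter> set (P m w) \<subseteq> {m}"
  proof
    fix z assume z: "z \<in> set (P m x) \<inter> set (P m w)"
    have zV: "z \<in> V" using z set_tree_path_subset mV assms by blast
    have "z \<in> ?S" using z set_tree_path_suffix_subset assms m by blast
    then have "d r z \<le> d r m" "d r x = d r z + d z x" using mmax tree_path_split(3) assms by auto
    moreover have "d m x = d m z + d z x" using tree_path_split(3)[OF mV assms(2)] z by blast
    ultimately have "d m z = 0" using ex by linarith
    then show "z \<in> {m}" using gdist_eq_0_iff[OF mV zV] by simp
  qed
  have "d x w = d x m + d m w"
    using gdist_append[OF assms(2) mV assms(3)] int tree_path_rev[OF mV assms(2)] by simp
  then show thesis using that mV int ex ew by blast
qed

lemma gdist_triangle: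
  assumes "r \<in> V" "x \<in> V" "w \<in> V" shows "d x w \<le> d x r + d r w"
proof -
  obtain m where "m \<in> V" "d r x = d r m + d m x" "d r w = d r m + d m w" "d x w = d x m + d m w"
    using branching_vertex[OF assms] by blast
  then show ?thesis using gdist_sym assms by simp
qed

end


section \<open>Branches at a vertex\<close>

context tree
begin

text \<open>\<open>branch c a\<close> is the vertex set of the component of \<open>T - c\<close> containing the neighbour \<open>a\<close>.\<close>
definition branch :: "'a \<Rightarrow> 'a \<Rightarrow> 'a set" where
  "branch c a = {x \<in> V. x \<noteq> c \<and> P c x ! 1 = a}"

definition nbrs :: "'a \<Rightarrow> 'a set" where
  "nbrs u = {z. {z,u} \<in> E}"

lemma mem_nbrs_iff: "z \<in> nbrs u \<longleftrightarrow> {u,z} \<in> E"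
  unfolding nbrs_def by (simp add: insert_commute)

lemma nbrs_subset: "nbrs u \<subseteq> V"
  unfolding nbrs_def using edge_vertices by blast

lemma finite_nbrs: "finite (nbrs u)"
  using finite_subset[OF nbrs_subset finite_V] .

lemma degree_eq_card_nbrs: "degree E u = card (nbrs u)"
  unfolding degree_def nbrs_def by simp

lemma tree_path_second:
  assumes "c \<in> V" "x \<in> V" "x \<noteq> c"
  shows "length (P c x) \<ge> 2" "{c, P c x ! 1} \<in> E"
proof -
  show l: "length (P c x) \<ge> 2"
    using length_tree_path[OF assms(1,2)] gdist_eq_0_iff[OF assms(1,2)] assms(3) by simp
  show "{c, P c x ! 1} \<in> E"
    using successively_nth[OF tree_path_props(5)[OF assms(1,2)], of 0] l tree_path_props(6)[OF assms(1,2)]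
    by simp
qed

lemma tree_path_second_mem_nbrs: "c \<in> V \<Longrightarrow> z \<in> V \<Longrightarrow> z \<noteq> c \<Longrightarrow> P z c ! 1 \<in> nbrs z"
  using tree_path_second(2)[of z c] mem_nbrs_iff by simp

lemma branch_subset: "branch c a \<subseteq> V"
  unfolding branch_def by blast

lemma mem_branch_self: "{c,a} \<in> E \<Longrightarrow> a \<in> branch c a"
  unfolding branch_def using tree_path_edge[of c a] edge_vertices[of c a] by auto

lemma branch_disjoint: "x \<in> branch c a \<Longrightarrow> x \<in> branch c b \<Longrightarrow> a = b"
  unfolding branch_def by simp

lemma mem_branch_of_nonmajor:
  assumes "c \<in> V" "\<not> is_major V E c" "{c,a} \<in> E" "{c,b} \<in> E" "a \<noteq> b" "x \<in> V" "x \<noteq> c"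
  shows "x \<in> branch c a \<or> x \<in> branch c b"
proof -
  have ab: "{a,b} \<subseteq> nbrs c" using assms(3,4) mem_nbrs_iff by auto
  have "card (nbrs c) \<le> card {a,b}"
    using assms(1,2,5) by (simp add: is_major_def degree_eq_card_nbrs)
  then have "nbrs c = {a,b}" using card_seteq[OF finite_nbrs ab] by simp
  then show ?thesis
    using tree_path_second(2)[OF assms(1,6,7)] mem_nbrs_iff assms(6,7) by (auto simp: branch_def)
qed

lemma branch_tree_path:
  assumes "c \<in> V" "x \<in> branch c a"
  shows "P c x = c # P a x" "d c x = Suc (d a x)" "a \<in> V" "{c,a} \<in> E"
proof -
  have x: "x \<in> V" "x \<noteq> c" "P c x ! 1 = a" using assms by (auto simp: branch_def)
  have l: "1 < length (P c x)" using tree_path_second(1)[OF assms(1) x(1,2)] by simp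
  show e: "{c,a} \<in> E" using tree_path_second(2)[OF assms(1) x(1,2)] x by simp
  show aV: "a \<in> V" using edge_vertices e by blast
  have "P a x = drop 1 (P c x)" using tree_path_drop[OF assms(1) x(1) l] x by simp
  then show pc: "P c x = c # P a x" using tree_path_props(1,2)[OF assms(1) x(1)]
    by (cases "P c x") auto
  show "d c x = Suc (d a x)" using length_tree_path[OF assms(1) x(1)] length_tree_path[OF aV x(1)] pc
    by simp
qed

lemma tree_path_leaving_branch:
  assumes "c \<in> V" "x \<in> branch c a" "w \<in> V" "w \<notin> branch c a"
  shows "P x w = P x c @ tl (P c w)" "d x w = d x c + d c w"
proof -
  have x: "x \<in> V" "x \<noteq> c" "P c x ! 1 = a" using assms by (auto simp: branch_def)
  have "set (P x c) \<inter> set (P c w) \<subseteq> {c}"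
  proof
    fix z assume z: "z \<in> set (P x c) \<inter> set (P c w)"
    show "z \<in> {c}"
    proof (rule ccontr)
      assume zc: "z \<notin> {c}"
      have "z \<in> set (P c x)" using z tree_path_rev[OF x(1) assms(1)] by simp
      then have "P c z ! 1 = a" using tree_path_nth1_eq[OF assms(1) x(1)] zc x by simp
      moreover have "w \<noteq> c" using z zc tree_path_self by auto
      ultimately have "w \<in> branch c a"
        using tree_path_nth1_eq[OF assms(1,3)] z zc assms(3) by (auto simp: branch_def)
      then show False using assms(4) by simp
    qed
  qed
  then show "P x w = P x c @ tl (P c w)" "d x w = d x c + d c w"
    using tree_path_append[OF x(1) assms(1,3)] gdist_append[OF x(1) assms(1,3)] by auto
qed

lemma branch_of_branch:
  assumes "c \<in> V" "u \<in> branch c a" "{u,v} \<in> E" "v \<noteq> P u c ! 1" "z \<in> branch u v"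
  shows "z \<in> branch c a" "d c u < d c z"
proof -
  have u: "u \<in> V" "u \<noteq> c" "P c u ! 1 = a" using assms(2) by (auto simp: branch_def)
  have z: "z \<in> V" "z \<noteq> u" using assms(5) by (auto simp: branch_def)
  have "c \<notin> branch u v" using assms(4) by (auto simp: branch_def)
  then have pz: "P z c = P z u @ tl (P u c)" and dz: "d z c = d z u + d u c"
    using tree_path_leaving_branch[OF u(1) assms(5) assms(1)] by auto
  have "d z u \<noteq> 0" using gdist_eq_0_iff[OF z(1) u(1)] z(2) by blast
  then show lt: "d c u < d c z" using dz gdist_sym z(1) u(1) assms(1) by simp
  have "u \<in> set (P c z)"
    using pz tree_path_rev[OF assms(1) z(1)] tree_path_props(1,3)[OF z(1) u(1)] last_in_set
    by (metis Un_iff rev_rev_ident set_append set_rev)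
  then have "P c z ! 1 = a" using tree_path_nth1_eq[OF assms(1) z(1) _ u(2)] u(3) by simp
  then show "z \<in> branch c a" using z(1) lt gdist_self[OF assms(1)] by (auto simp: branch_def)
qed

lemma edge_away_from_root:
  assumes "c \<in> V" "z \<in> V" "z \<noteq> c" "{z,t} \<in> E" "t \<noteq> P z c ! 1"
  shows "t \<in> V" "d c t = Suc (d c z)" "P c t ! 1 = P c z ! 1"
proof -
  show tV: "t \<in> V" using edge_vertices assms(4) by blast
  have tb: "t \<in> branch z t" using mem_branch_self[OF assms(4)] .
  have "c \<notin> branch z t" using assms(5) by (auto simp: branch_def)
  then have pt: "P t c = P t z @ tl (P z c)" and dt: "d t c = d t z + d z c"
    using tree_path_leaving_branch[OF assms(2) tb assms(1)] by auto
  have "d t z = 1" using gdist_edge assms(4) gdist_sym[OF assms(2) tV] by simp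
  then show "d c t = Suc (d c z)" using dt gdist_sym tV assms(1,2) by simp
  have "z \<in> set (P c t)"
    using pt tree_path_rev[OF assms(1) tV] tree_path_props(1,3)[OF tV assms(2)] last_in_set
    by (metis Un_iff rev_rev_ident set_append set_rev)
  then show "P c t ! 1 = P c z ! 1"
    using tree_path_nth1_eq[OF assms(1) tV _ assms(3)] by simp
qed

lemma nbrs_of_locally_farthest:
  assumes "c \<in> V" "z \<in> V" "z \<noteq> c" "\<And>t. {z,t} \<in> E \<Longrightarrow> t \<noteq> P z c ! 1 \<Longrightarrow> d c t \<le> d c z"
  shows "nbrs z = {P z c ! 1}"
proof -
  have "t = P z c ! 1" if "{z,t} \<in> E" for t
    using assms(4)[OF that] edge_away_from_root(2)[OF assms(1-3) that] by force
  then show ?thesis using tree_path_second_mem_nbrs[OF assms(1-3)] mem_nbrs_iff by blast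
qed

lemma branch_edge_away_from_root:
  assumes "c \<in> V" "z \<in> branch c a" "{z,t} \<in> E" "t \<noteq> P z c ! 1"
  shows "t \<in> branch c a"
proof -
  have z: "z \<in> V" "z \<noteq> c" "P c z ! 1 = a" using assms(2) by (auto simp: branch_def)
  note t = edge_away_from_root[OF assms(1) z(1,2) assms(3,4)]
  have "t \<noteq> c" using t(2) gdist_self[OF assms(1)] by auto
  then show ?thesis using t(1,3) z(3) by (simp add: branch_def)
qed

lemma ex_leaf:
  assumes "r \<in> V" "v \<in> V" "v \<noteq> r"
  obtains l where "l \<in> V" "l \<noteq> r" "nbrs l = {P l r ! 1}"
proof -
  obtain z where z: "z \<in> V" and zmax: "\<And>y. y \<in> V \<Longrightarrow> d r y \<le> d r z"
    using ex_max_on_finite[OF finite_V, of "d r"] assms(1) by blast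
  have "z \<noteq> r" using zmax[OF assms(2)] assms gdist_eq_0_iff gdist_self by fastforce
  moreover have "\<And>t. {z,t} \<in> E \<Longrightarrow> d r t \<le> d r z"
    using zmax edge_vertices by blast
  ultimately show thesis using that z nbrs_of_locally_farthest[OF assms(1) z] by blast
qed

section \<open>Pairs not resolved by a set of vertices\<close>

lemma gdist_lt_in_branch:
  assumes "m \<in> V" "x \<in> branch m a" "y \<in> branch m b" "a \<noteq> b" "d m x = d m y" "w \<in> branch m a"
  shows "d x w < d y w"
proof -
  have xV: "x \<in> V" and yV: "y \<in> V" and wV: "w \<in> V" using assms branch_subset by auto
  have "w \<notin> branch m b" using assms branch_disjoint by metis
  then have dy: "d y w = d y m + d m w" using tree_path_leaving_branch[OF assms(1,3) wV] by simp
  have aV: "a \<in> V" using branch_tree_path[OF assms(1,2)] by simp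
  have "d m x = Suc (d a x)" "d m w = Suc (d a w)" using branch_tree_path assms by auto
  then show ?thesis
    using gdist_triangle[OF aV xV wV] dy gdist_sym[OF xV aV] gdist_sym[OF yV assms(1)] assms(5)
    by linarith
qed

text \<open>Take \<open>c\<close> where the paths from some \<open>w0 \<in> W\<close> to \<open>x\<close> and \<open>y\<close> split, and \<open>a\<close>, \<open>b\<close> the next
  vertices towards \<open>x\<close>, \<open>y\<close>: any \<open>w \<in> W\<close> in the branch at \<open>a\<close> would be closer to \<open>x\<close> than to \<open>y\<close>.\<close>
lemma unresolved_pair_free_branches:
  assumes "W \<subseteq> V" "w0 \<in> W" "x \<in> V" "y \<in> V" "x \<noteq> y" "\<forall>w\<in>W. d x w = d y w"
  obtains c a b where "c \<in> V" "{c,a} \<in> E" "{c,b} \<in> E" "a \<noteq> b"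
    "branch c a \<inter> W = {}" "branch c b \<inter> W = {}"
proof -
  have w0V: "w0 \<in> V" using assms by blast
  obtain m where m: "m \<in> V" "set (P m x) \<inter> set (P m y) \<subseteq> {m}"
     "d w0 x = d w0 m + d m x" "d w0 y = d w0 m + d m y"
    using branching_vertex[OF w0V assms(3,4)] by blast
  have eq: "d m x = d m y" using assms(2,6) m gdist_sym w0V assms(3,4) by force
  have xm: "x \<noteq> m" and ym: "y \<noteq> m"
    using eq gdist_eq_0_iff[OF m(1)] gdist_self[OF m(1)] assms(3-5) by metis+
  define a where "a = P m x ! 1"
  define b where "b = P m y ! 1"
  have "a \<in> set (P m x)" "b \<in> set (P m y)"
    using tree_path_second(1)[OF m(1) assms(3) xm] tree_path_second(1)[OF m(1) assms(4) ym]
      a_def b_def by auto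
  moreover have "a \<noteq> m"
    using nth_eq_iff_index_eq[OF tree_path_props(4)[OF m(1) assms(3)], of 1 0]
      tree_path_second(1)[OF m(1) assms(3) xm] tree_path_props(6)[OF m(1) assms(3)] a_def by fastforce
  ultimately have ab: "a \<noteq> b" using m(2) by blast
  have xa: "x \<in> branch m a" and yb: "y \<in> branch m b"
    using a_def b_def assms(3,4) xm ym by (auto simp: branch_def)
  have "branch m a \<inter> W = {}" "branch m b \<inter> W = {}"
    using gdist_lt_in_branch[OF m(1) xa yb ab eq] gdist_lt_in_branch[OF m(1) yb xa ab[symmetric] eq[symmetric]]
      assms(6) by fastforce+
  then show thesis
    using that m(1) ab tree_path_second(2)[OF m(1) assms(3) xm] tree_path_second(2)[OF m(1) assms(4) ym]
      a_def b_def by blast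
qed

text \<open>A tree without major vertices is a path, resolved by one of its end vertices.\<close>
lemma resolving_vertex_if_no_major:
  assumes "\<forall>v. \<not> is_major V E v" "r \<in> V"
  obtains l where "l \<in> V" "\<forall>x\<in>V. \<forall>y\<in>V. d x l = d y l \<longrightarrow> x = y"
proof (cases "\<exists>v\<in>V. v \<noteq> r")
  case False
  then have "\<forall>x\<in>V. \<forall>y\<in>V. x = y" using assms(2) by metis
  then show thesis using that[OF assms(2)] by blast
next
  case True
  then obtain v where "v \<in> V" "v \<noteq> r" by blast
  then obtain l where l: "l \<in> V" "l \<noteq> r" "nbrs l = {P l r ! 1}" by (rule ex_leaf[OF assms(2)])
  have "x = y" if xy: "x \<in> V" "y \<in> V" "d x l = d y l" for x y
  proof (rule ccontr)
    assume "x \<noteq> y"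
    obtain c a b where c: "c \<in> V" "{c,a} \<in> E" "{c,b} \<in> E" "a \<noteq> b"
      "branch c a \<inter> {l} = {}" "branch c b \<inter> {l} = {}"
      by (rule unresolved_pair_free_branches[of "{l}" l x y]) (use l(1) xy \<open>x \<noteq> y\<close> in auto)
    have "a \<in> nbrs c" "b \<in> nbrs c" using c(2,3) mem_nbrs_iff by auto
    then have "l \<noteq> c" using l(3) c(4) by auto
    then show False using mem_branch_of_nonmajor[OF c(1) _ c(2-4) l(1)] assms(1) c(5,6) by auto
  qed
  then show thesis using that l(1) by blast
qed

end


section \<open>Signed distances\<close>

lemma path_sign_Cons:
  assumes "q \<noteq> []" shows "path_sign \<sigma> (x # q) = \<sigma> {x, hd q} * path_sign \<sigma> q"
proof -
  obtain n where n: "length q = Suc n" using assms by (cases q) auto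
  have "path_sign \<sigma> (x # q) = (\<Prod>i<Suc n. \<sigma> {(x # q) ! i, (x # q) ! Suc i})"
    unfolding path_sign_def using n by simp
  also have "\<dots> = \<sigma> {x, q ! 0} * (\<Prod>i<n. \<sigma> {q ! i, q ! Suc i})"
    by (simp only: prod.lessThan_Suc_shift) simp
  also have "\<dots> = \<sigma> {x, hd q} * path_sign \<sigma> q"
    unfolding path_sign_def using n assms by (simp add: hd_conv_nth)
  finally show ?thesis .
qed

lemma path_sign_unit:
  assumes "\<forall>e\<in>E. \<sigma> e = 1 \<or> \<sigma> e = -1" "successively (\<lambda>x y. {x,y} \<in> E) p"
  shows "path_sign \<sigma> p = 1 \<or> path_sign \<sigma> p = -1"
  using assms(2)
proof (induction p)
  case Nil
  then show ?case by (simp add: path_sign_def)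
next
  case (Cons x q)
  show ?case
  proof (cases "q = []")
    case True
    then show ?thesis by (simp add: path_sign_def)
  next
    case False
    have e: "{x, hd q} \<in> E" and s: "successively (\<lambda>x y. {x,y} \<in> E) q"
      using Cons.prems False by (auto simp: successively_Cons)
    have "path_sign \<sigma> q = 1 \<or> path_sign \<sigma> q = -1" using Cons.IH s by blast
    moreover have "\<sigma> {x, hd q} = 1 \<or> \<sigma> {x, hd q} = -1" using assms(1) e by blast
    ultimately show ?thesis using path_sign_Cons[OF False] by auto
  qed
qed

context tree
begin

lemma abs_signed_dist:
  assumes "\<forall>e\<in>E. \<sigma> e = 1 \<or> \<sigma> e = -1" "x \<in> V" "w \<in> V"
  shows "\<bar>signed_dist E \<sigma> x w\<bar> = int (d x w)"
  using path_sign_unit[OF assms(1) tree_path_props(5)[OF assms(2,3)]]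
  unfolding signed_dist_def by (auto simp: abs_mult)

lemma signed_dist_from_nbr:
  assumes "{c,a} \<in> E" "w \<in> V" "w \<notin> branch c a"
  shows "signed_dist E \<sigma> a w = \<sigma> {a, c} * path_sign \<sigma> (P c w) * int (Suc (d c w))"
proof -
  have cV: "c \<in> V" using edge_vertices assms(1) by blast
  have ab: "a \<in> branch c a" using mem_branch_self[OF assms(1)] .
  have pa: "P a w = P a c @ tl (P c w)" and da: "d a w = d a c + d c w"
    using tree_path_leaving_branch[OF cV ab assms(2,3)] by auto
  have "P a c = [a, c]" "d a c = 1"
    using tree_path_edge[of a c] gdist_edge[of a c] assms(1) by (simp_all add: insert_commute)
  moreover have "P c w = c # tl (P c w)"
    using tree_path_props(1,2)[OF cV assms(2)] by (metis list.collapse)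
  ultimately have "P a w = a # P c w" using pa by (metis append_Cons append_Nil)
  then have "path_sign \<sigma> (P a w) = \<sigma> {a, c} * path_sign \<sigma> (P c w)"
    using path_sign_Cons[OF tree_path_props(1)[OF cV assms(2)]] tree_path_props(2)[OF cV assms(2)]
    by simp
  then show ?thesis unfolding signed_dist_def using da \<open>d a c = 1\<close> by simp
qed

text \<open>Two neighbours of \<open>c\<close> whose branches avoid \<open>W\<close> and whose edges to \<open>c\<close> carry the same
  sign have equal signed distances to all of \<open>W\<close>; with only two signs available, three such
  neighbours cannot exist for a signed resolving set.\<close>
lemma signed_resolving_no_three_free_branches:
  assumes sign: "\<forall>e\<in>E. \<sigma> e = 1 \<or> \<sigma> e = -1" and "W \<subseteq> V"
    and res: "\<forall>x\<in>V. \<forall>y\<in>V. (\<forall>w\<in>W. signed_dist E \<sigma> x w = signed_dist E \<sigma> y w) \<longrightarrow> x = y"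
    and c: "{c,a1} \<in> E" "{c,a2} \<in> E" "{c,a3} \<in> E" "a1 \<noteq> a2" "a1 \<noteq> a3" "a2 \<noteq> a3"
    "branch c a1 \<inter> W = {}" "branch c a2 \<inter> W = {}" "branch c a3 \<inter> W = {}"
  shows False
proof -
  have same_sign: "a = b"
    if ab: "{c,a} \<in> E" "{c,b} \<in> E" "branch c a \<inter> W = {}" "branch c b \<inter> W = {}"
      "\<sigma> {a,c} = \<sigma> {b,c}" for a b
  proof -
    have "signed_dist E \<sigma> a w = signed_dist E \<sigma> b w" if "w \<in> W" for w
    proof -
      have "w \<in> V" "w \<notin> branch c a" "w \<notin> branch c b" using that ab(3,4) \<open>W \<subseteq> V\<close> by auto
      then show ?thesis using signed_dist_from_nbr ab(1,2,5) by simp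
    qed
    moreover have "a \<in> V" "b \<in> V" using edge_vertices ab by blast+
    ultimately show "a = b" using res by blast
  qed
  have "\<sigma> {a,c} = 1 \<or> \<sigma> {a,c} = -1" if "{c,a} \<in> E" for a
    using sign that by (simp add: insert_commute)
  then have "\<sigma> {a1,c} = \<sigma> {a2,c} \<or> \<sigma> {a1,c} = \<sigma> {a3,c} \<or> \<sigma> {a2,c} = \<sigma> {a3,c}"
    using c(1-3) by metis
  then show False using same_sign c by blast
qed

end

lemma resolving_iff:
  "resolving V f L \<longleftrightarrow> distinct L \<and> set L \<subseteq> V \<and>
     (\<forall>x\<in>V. \<forall>y\<in>V. (\<forall>w\<in>set L. f x w = f y w) \<longrightarrow> x = y)"
  unfolding resolving_def inj_on_def by (simp add: map_eq_conv)

lemma metric_dim_le: "resolving V f L \<Longrightarrow> metric_dim V f \<le> length L"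
  unfolding metric_dim_def by (rule Least_le) blast

lemma metric_dim_le_card:
  assumes "finite S" "S \<subseteq> V" "\<forall>x\<in>V. \<forall>y\<in>V. (\<forall>w\<in>S. f x w = f y w) \<longrightarrow> x = y"
  shows "metric_dim V f \<le> card S"
proof -
  obtain L where L: "set L = S" "distinct L" using finite_distinct_list[OF assms(1)] by blast
  have "resolving V f L" unfolding resolving_iff using L assms by simp
  then show ?thesis using metric_dim_le[of V f L] distinct_card[OF L(2)] L(1) by simp
qed

lemma ex_resolving_length_metric_dim:
  assumes "finite V" "\<And>x y. x \<in> V \<Longrightarrow> y \<in> V \<Longrightarrow> f x y = f y y \<Longrightarrow> x = y"
  obtains L where "length L = metric_dim V f" "resolving V f L"
proof -
  obtain L where L: "set L = V" "distinct L" using finite_distinct_list[OF assms(1)] by blast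
  have "resolving V f L" unfolding resolving_iff using L assms(2) by auto
  have "\<exists>L. length L = metric_dim V f \<and> resolving V f L"
    unfolding metric_dim_def by (rule LeastI_ex) (use \<open>resolving V f L\<close> in blast)
  then show thesis using that by blast
qed


section \<open>Completing a landmark set with few free branches\<close>

text \<open>\<open>W\<close> plays the role of a signed resolving set, via
  \<open>signed_resolving_no_three_free_branches\<close>.\<close>
locale tree_landmarks = tree +
  fixes W :: "'a set"
  assumes landmarks_subset: "W \<subseteq> V" and landmarks_nonempty: "W \<noteq> {}"
    and no_three_free_branches: "\<And>c a1 a2 a3. {c,a1} \<in> E \<Longrightarrow> {c,a2} \<in> E \<Longrightarrow> {c,a3} \<in> E \<Longrightarrow>
       a1 \<noteq> a2 \<Longrightarrow> a1 \<noteq> a3 \<Longrightarrow> a2 \<noteq> a3 \<Longrightarrow>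
       branch c a1 \<inter> W = {} \<Longrightarrow> branch c a2 \<inter> W = {} \<Longrightarrow> branch c a3 \<inter> W = {} \<Longrightarrow> False"
begin

definition free_branch :: "'a \<Rightarrow> 'a \<Rightarrow> bool" where
  "free_branch c a \<longleftrightarrow> {c,a} \<in> E \<and> branch c a \<inter> W = {}"

definition forked :: "'a \<Rightarrow> bool" where
  "forked c \<longleftrightarrow> c \<in> V \<and> (\<exists>a b. a \<noteq> b \<and> free_branch c a \<and> free_branch c b)"

definition lowest_fork :: "'a \<Rightarrow> bool" where
  "lowest_fork c \<longleftrightarrow> forked c \<and> (\<forall>a z. free_branch c a \<longrightarrow> z \<in> branch c a \<longrightarrow> \<not> is_major V E z)"

lemma free_branch_vertices: "free_branch c a \<Longrightarrow> c \<in> V \<and> a \<in> V"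
  unfolding free_branch_def using edge_vertices by blast

lemma free_branch_eq_if_two:
  assumes "free_branch c a" "free_branch c b" "a \<noteq> b" "free_branch c a0"
  shows "a0 = a \<or> a0 = b"
  using no_three_free_branches[of c a b a0] assms by (auto simp: free_branch_def)

text \<open>Seen from inside a free branch at \<open>c\<close>, the branch containing \<open>c\<close> contains all of \<open>W\<close>.\<close>
lemma branch_towards_root_not_free:
  assumes "free_branch c a" "c' \<in> branch c a"
  shows "\<not> free_branch c' (P c' c ! 1)"
proof
  assume fr: "free_branch c' (P c' c ! 1)"
  obtain w where w: "w \<in> W" using landmarks_nonempty by blast
  have cV: "c \<in> V" using free_branch_vertices assms(1) by blast
  have wV: "w \<in> V" using w landmarks_subset by blast
  have wn: "w \<notin> branch c a" using w assms(1) by (auto simp: free_branch_def)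
  have c': "c' \<in> V" "c' \<noteq> c" using assms(2) by (auto simp: branch_def)
  have pw: "P c' w = P c' c @ tl (P c w)" using tree_path_leaving_branch(1)[OF cV assms(2) wV wn] .
  have "length (P c' c) \<ge> 2" using tree_path_second(1)[OF c'(1) cV] c'(2) by simp
  then have "P c' w ! 1 = P c' c ! 1" using pw by (simp add: nth_append)
  moreover have "w \<noteq> c'" using wn assms(2) by blast
  ultimately have "w \<in> branch c' (P c' c ! 1)" using wV by (simp add: branch_def)
  then show False using fr w by (auto simp: free_branch_def)
qed

lemma free_branch_of_branch:
  assumes "free_branch c a" "u \<in> branch c a" "{u,v} \<in> E" "v \<noteq> P u c ! 1"
  shows "free_branch u v" "branch u v \<subseteq> branch c a"
proof -
  have cV: "c \<in> V" using free_branch_vertices assms(1) by blast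
  show sub: "branch u v \<subseteq> branch c a" using branch_of_branch(1)[OF cV assms(2,3,4)] by blast
  show "free_branch u v" using sub assms(1,3) by (auto simp: free_branch_def)
qed

lemma major_in_free_branch_forked:
  assumes "free_branch c a" "u \<in> branch c a" "is_major V E u"
  shows "forked u"
proof -
  have u: "u \<in> V" using assms(2) branch_subset by blast
  let ?t = "P u c ! 1"
  have "3 \<le> card (nbrs u)" using assms(3) by (simp add: is_major_def degree_eq_card_nbrs)
  moreover have "card (nbrs u) - card {?t} \<le> card (nbrs u - {?t})"
    by (rule diff_card_le_card_Diff) simp
  ultimately have "\<not> card (nbrs u - {?t}) \<le> Suc 0" by simp
  then obtain v1 v2 where v: "v1 \<in> nbrs u - {?t}" "v2 \<in> nbrs u - {?t}" "v1 \<noteq> v2"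
    using card_le_Suc0_iff_eq[of "nbrs u - {?t}"] finite_nbrs by blast
  have "free_branch u v1" "free_branch u v2"
    using free_branch_of_branch(1)[OF assms(1,2)] v mem_nbrs_iff by auto
  then show ?thesis using v(3) u by (auto simp: forked_def)
qed

text \<open>Besides its two free branches, a fork inside a free branch has the non-free branch towards
  the root, hence degree at least three.\<close>
lemma forked_in_free_branch_major:
  assumes "free_branch c a" "c' \<in> branch c a" "forked c'"
  shows "is_major V E c'"
proof -
  have cV: "c \<in> V" using free_branch_vertices assms(1) by blast
  have c'V: "c' \<in> V" "c' \<noteq> c" using assms(2) by (auto simp: branch_def)
  obtain a1 a2 where a: "a1 \<noteq> a2" "free_branch c' a1" "free_branch c' a2"
    using assms(3) by (auto simp: forked_def)
  have tnf: "\<not> free_branch c' (P c' c ! 1)"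
    using branch_towards_root_not_free[OF assms(1,2)] .
  have sub: "{a1, a2, P c' c ! 1} \<subseteq> nbrs c'"
    using a tree_path_second_mem_nbrs[OF cV c'V] mem_nbrs_iff by (auto simp: free_branch_def)
  have "a1 \<noteq> P c' c ! 1" "a2 \<noteq> P c' c ! 1" using a tnf by auto
  then have "card {a1, a2, P c' c ! 1} = 3" using a(1) by simp
  then have "3 \<le> card (nbrs c')" using card_mono[OF finite_nbrs sub] by simp
  then show ?thesis using c'V by (simp add: is_major_def degree_eq_card_nbrs)
qed

text \<open>A fork in a free branch farthest from \<open>c\<close> has no major vertex in its free branches.\<close>
lemma ex_lowest_major_fork:
  assumes "free_branch c a" "u \<in> branch c a" "is_major V E u"
  obtains c' where "c' \<in> branch c a" "lowest_fork c'" "is_major V E c'"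
proof -
  have cV: "c \<in> V" using free_branch_vertices assms(1) by blast
  let ?S = "{z \<in> branch c a. forked z}"
  have "finite ?S" by (rule finite_subset[OF _ finite_V]) (use branch_subset in blast)
  moreover have "u \<in> ?S" using major_in_free_branch_forked[OF assms] assms(2) by blast
  ultimately obtain c' where c': "c' \<in> ?S" and cmax: "\<And>z. z \<in> ?S \<Longrightarrow> d c z \<le> d c c'"
    using ex_max_on_finite[of ?S "d c"] by blast
  have c'b: "c' \<in> branch c a" and "forked c'" using c' by auto
  have tnf: "\<not> free_branch c' (P c' c ! 1)" using branch_towards_root_not_free[OF assms(1) c'b] .
  have "lowest_fork c'"
    unfolding lowest_fork_def
  proof (intro conjI allI impI notI)
    show "forked c'" by fact
    fix a' z assume fa: "free_branch c' a'" and z: "z \<in> branch c' a'" and mz: "is_major V E z"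
    have "a' \<noteq> P c' c ! 1" using fa tnf by auto
    moreover have "{c',a'} \<in> E" using fa by (simp add: free_branch_def)
    ultimately have "z \<in> branch c a" "d c c' < d c z" using branch_of_branch[OF cV c'b _ _ z] by auto
    moreover have "forked z" using major_in_free_branch_forked[OF fa z mz] .
    ultimately show False using cmax by fastforce
  qed
  moreover have "is_major V E c'" using forked_in_free_branch_major[OF assms(1) c'b \<open>forked c'\<close>] .
  ultimately show thesis using that c'b by blast
qed

text \<open>The farthest vertex of a free branch of a lowest major fork \<open>c\<close> is a terminal vertex of \<open>c\<close>.\<close>
lemma lowest_major_fork_exterior:
  assumes "lowest_fork c" "is_major V E c"
  shows "is_exterior_major V E c"
proof -
  obtain a where fa: "free_branch c a" using assms(1) by (auto simp: lowest_fork_def forked_def)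
  have cV: "c \<in> V" using free_branch_vertices fa by blast
  have nomaj: "\<And>z. z \<in> branch c a \<Longrightarrow> \<not> is_major V E z"
    using assms(1) fa by (auto simp: lowest_fork_def)
  have "finite (branch c a)" using finite_subset[OF branch_subset finite_V] .
  moreover have "a \<in> branch c a" using mem_branch_self fa by (simp add: free_branch_def)
  ultimately obtain z where z: "z \<in> branch c a" and zmax: "\<And>y. y \<in> branch c a \<Longrightarrow> d c y \<le> d c z"
    using ex_max_on_finite[of "branch c a" "d c"] by blast
  have zV: "z \<in> V" "z \<noteq> c" using z by (auto simp: branch_def)
  have "nbrs z = {P z c ! 1}"
    using nbrs_of_locally_farthest[OF cV zV] branch_edge_away_from_root[OF cV z] zmax by blast
  then have "is_leaf V E z" using zV by (simp add: is_leaf_def degree_eq_card_nbrs)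
  have "is_terminal V E z c"
    unfolding is_terminal_def
  proof (intro conjI allI impI)
    show "is_leaf V E z" "is_major V E c" by fact+
    fix w assume w: "is_major V E w \<and> w \<noteq> c"
    have wV: "w \<in> V" using w by (simp add: is_major_def)
    have "w \<notin> branch c a" using w nomaj by blast
    then have "d z w = d z c + d c w" using tree_path_leaving_branch(2)[OF cV z wV] by blast
    moreover have "d c w \<noteq> 0" using gdist_eq_0_iff[OF cV wV] w by auto
    ultimately show "gdist E z c < gdist E z w" by simp
  qed
  then show ?thesis using assms(2) by (auto simp: is_exterior_major_def)
qed

end


context tree_landmarks
begin

definition lowest_major_forks :: "'a set" where
  "lowest_major_forks = {c. lowest_fork c \<and> is_major V E c}"

definition free_nbr :: "'a \<Rightarrow> 'a" where
  "free_nbr c = (SOME a. free_branch c a)"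

definition extra_landmarks :: "'a set" where
  "extra_landmarks = free_nbr ` lowest_major_forks"

lemma free_branch_free_nbr: "c \<in> lowest_major_forks \<Longrightarrow> free_branch c (free_nbr c)"
  unfolding lowest_major_forks_def free_nbr_def lowest_fork_def forked_def by (auto intro: someI)

lemma free_nbr_mem_extra_landmarks: "c \<in> lowest_major_forks \<Longrightarrow> free_nbr c \<in> extra_landmarks"
  unfolding extra_landmarks_def by blast

lemma extra_landmarks_subset: "extra_landmarks \<subseteq> V"
  unfolding extra_landmarks_def using free_branch_free_nbr free_branch_vertices by blast

lemma card_extra_landmarks_le_ext: "card extra_landmarks \<le> ext V E"
proof -
  have low: "lowest_major_forks \<subseteq> {v. is_exterior_major V E v}"
    unfolding lowest_major_forks_def using lowest_major_fork_exterior by blast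
  have fin: "finite {v. is_exterior_major V E v}"
    using finite_subset[OF _ finite_V] by (auto simp: is_exterior_major_def is_major_def)
  have "card extra_landmarks \<le> card lowest_major_forks"
    unfolding extra_landmarks_def using finite_subset[OF low fin] by (rule card_image_le)
  also have "\<dots> \<le> ext V E" unfolding ext_def using card_mono[OF fin low] .
  finally show ?thesis .
qed

lemma free_branch_meets_extra_landmarks:
  assumes "free_branch c a" "z \<in> branch c a" "is_major V E z"
  shows "branch c a \<inter> extra_landmarks \<noteq> {}"
proof -
  obtain c' where c': "c' \<in> branch c a" "lowest_fork c'" "is_major V E c'"
    using ex_lowest_major_fork[OF assms] by blast
  then have cL: "c' \<in> lowest_major_forks" by (simp add: lowest_major_forks_def)
  have ff: "free_branch c' (free_nbr c')" using free_branch_free_nbr[OF cL] .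
  then have "free_nbr c' \<noteq> P c' c ! 1" using branch_towards_root_not_free[OF assms(1) c'(1)] by auto
  moreover have e: "{c', free_nbr c'} \<in> E" using ff by (simp add: free_branch_def)
  ultimately have "branch c' (free_nbr c') \<subseteq> branch c a"
    using free_branch_of_branch(2)[OF assms(1) c'(1)] by blast
  then have "free_nbr c' \<in> branch c a" using mem_branch_self[OF e] by blast
  then show ?thesis using free_nbr_mem_extra_landmarks[OF cL] by blast
qed

text \<open>If a pair of vertices is not resolved by \<open>W \<union> extra_landmarks\<close>, the vertex \<open>c\<close> where
  their paths split has two free branches and no landmark in any of its free branches. By
  \<open>free_branch_meets_extra_landmarks\<close> these branches contain no major vertex, so \<open>c\<close> is a lowest
  fork; it cannot be major (else its chosen free neighbour is a landmark) and it cannot have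
  degree two (else the major vertex would lie in one of its two branches).\<close>
lemma landmarks_resolve:
  assumes "\<exists>v. is_major V E v"
  shows "\<forall>x\<in>V. \<forall>y\<in>V. (\<forall>w\<in>W \<union> extra_landmarks. d x w = d y w) \<longrightarrow> x = y"
proof (intro ballI impI)
  fix x y assume xy: "x \<in> V" "y \<in> V" "\<forall>w\<in>W \<union> extra_landmarks. d x w = d y w"
  show "x = y"
  proof (rule ccontr)
    assume "x \<noteq> y"
    obtain w0 where "w0 \<in> W" using landmarks_nonempty by blast
    obtain c a b where c: "c \<in> V" "{c,a} \<in> E" "{c,b} \<in> E" "a \<noteq> b"
      "branch c a \<inter> (W \<union> extra_landmarks) = {}" "branch c b \<inter> (W \<union> extra_landmarks) = {}"
      by (rule unresolved_pair_free_branches[of "W \<union> extra_landmarks" w0 x y])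
        (use landmarks_subset extra_landmarks_subset xy \<open>x \<noteq> y\<close> \<open>w0 \<in> W\<close> in auto)
    have fab: "free_branch c a" "free_branch c b" using c(2,3,5,6) by (auto simp: free_branch_def)
    have no_extra: "branch c a0 \<inter> extra_landmarks = {}" if "free_branch c a0" for a0
      using free_branch_eq_if_two[OF fab c(4) that] c(5,6) by blast
    have no_major: "\<not> is_major V E z" if "free_branch c a0" "z \<in> branch c a0" for a0 z
      using free_branch_meets_extra_landmarks[OF that] no_extra[OF that(1)] by blast
    then have "lowest_fork c" using c(1,4) fab by (auto simp: lowest_fork_def forked_def)
    show False
    proof (cases "is_major V E c")
      case True
      then have cL: "c \<in> lowest_major_forks"
        using \<open>lowest_fork c\<close> by (simp add: lowest_major_forks_def)
      have ff: "free_branch c (free_nbr c)" using free_branch_free_nbr[OF cL] .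
      then have "free_nbr c \<in> branch c (free_nbr c)" using mem_branch_self by (simp add: free_branch_def)
      then show False using no_extra[OF ff] free_nbr_mem_extra_landmarks[OF cL] by blast
    next
      case False
      obtain v where v: "is_major V E v" using assms by blast
      then have "v \<in> V" "v \<noteq> c" using False by (auto simp: is_major_def)
      then have "v \<in> branch c a \<or> v \<in> branch c b"
        using mem_branch_of_nonmajor[OF c(1) False c(2-4)] by blast
      then show False using no_major fab v by blast
    qed
  qed
qed

lemma tree_dim_le_card_landmarks_plus_ext: "tree_dim V E \<le> card W + ext V E"
proof (cases "\<exists>v. is_major V E v")
  case True
  have fin: "finite (W \<union> extra_landmarks)"
    using finite_subset[OF _ finite_V] landmarks_subset extra_landmarks_subset by blast
  have "tree_dim V E \<le> card (W \<union> extra_landmarks)"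
    unfolding tree_dim_def
    by (rule metric_dim_le_card[OF fin])
      (use landmarks_subset extra_landmarks_subset landmarks_resolve[OF True] in auto)
  also have "\<dots> \<le> card W + card extra_landmarks" by (rule card_Un_le)
  also have "\<dots> \<le> card W + ext V E" using card_extra_landmarks_le_ext by simp
  finally show ?thesis .
next
  case False
  obtain w where w: "w \<in> W" using landmarks_nonempty by blast
  obtain l where l: "l \<in> V" "\<forall>x\<in>V. \<forall>y\<in>V. d x l = d y l \<longrightarrow> x = y"
    by (rule resolving_vertex_if_no_major[of w]) (use False w landmarks_subset in auto)
  have "tree_dim V E \<le> card {l}"
    unfolding tree_dim_def by (rule metric_dim_le_card) (use l in auto)
  also have "\<dots> \<le> card W"
    using w finite_subset[OF landmarks_subset finite_V] by (auto simp: Suc_le_eq card_gt_0_iff)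
  finally show ?thesis by simp
qed

end

context tree
begin

lemma signed_tree_dim_le_tree_dim:
  assumes sign: "\<forall>e\<in>E. \<sigma> e = 1 \<or> \<sigma> e = -1"
  shows "signed_tree_dim V E \<sigma> \<le> tree_dim V E"
proof -
  obtain L where L: "length L = tree_dim V E" "resolving V (\<lambda>u v. int (d u v)) L"
    using ex_resolving_length_metric_dim[OF finite_V, of "\<lambda>u v. int (d u v)"]
      gdist_eq_0_iff gdist_self unfolding tree_dim_def by force
  have "resolving V (signed_dist E \<sigma>) L"
    using L(2) abs_signed_dist[OF sign] unfolding resolving_iff by (metis subsetD)
  then show ?thesis using metric_dim_le L(1) unfolding signed_tree_dim_def by metis
qed

lemma tree_dim_le_signed_tree_dim_plus_ext:
  assumes sign: "\<forall>e\<in>E. \<sigma> e = 1 \<or> \<sigma> e = -1"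
  shows "tree_dim V E \<le> signed_tree_dim V E \<sigma> + ext V E"
proof -
  have "x = y" if "x \<in> V" "y \<in> V" "signed_dist E \<sigma> x y = signed_dist E \<sigma> y y" for x y
    using that abs_signed_dist[OF sign] gdist_eq_0_iff gdist_self by (metis of_nat_eq_0_iff)
  then obtain L where L: "length L = signed_tree_dim V E \<sigma>" "resolving V (signed_dist E \<sigma>) L"
    using ex_resolving_length_metric_dim[OF finite_V] unfolding signed_tree_dim_def by metis
  show ?thesis
  proof (cases "L = []")
    case True
    then have "resolving V (\<lambda>u v. int (d u v)) L" using L(2) by (simp add: resolving_def)
    then show ?thesis using metric_dim_le True unfolding tree_dim_def by fastforce
  next
    case False
    interpret tree_landmarks V E "set L"
      using L(2) signed_resolving_no_three_free_branches[OF sign] False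
      by unfold_locales (auto simp: resolving_iff)
    show ?thesis using tree_dim_le_card_landmarks_plus_ext L distinct_card
      by (simp add: resolving_def distinct_card)
  qed
qed

end

theorem theorem4p4:
  fixes V :: "'a set" and E :: "'a set set" and \<sigma> :: "'a set \<Rightarrow> int"
  assumes "is_tree V E"
    and "\<forall>e\<in>E. \<sigma> e = 1 \<or> \<sigma> e = -1"
  shows "int (tree_dim V E) - int (ext V E) \<le> int (signed_tree_dim V E \<sigma>)
       \<and> signed_tree_dim V E \<sigma> \<le> tree_dim V E"
proof -
  interpret tree V E by unfold_locales (rule assms(1))
  show ?thesis
    using tree_dim_le_signed_tree_dim_plus_ext[OF assms(2)] signed_tree_dim_le_tree_dim[OF assms(2)]
    by linarith
qed

end
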